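(* Let $\mathcal{D}_R$ be the class of all finite reflexive digraphs and let $D\in\mathcal{D}_R$. The class $\mathrm{Av}(D)=\{E\in\mathcal{D}_R: D\not\preceq E\}$, with respect to the homomorphic image ordering $\preceq$, is well quasi-ordered if and only if $D$ is isomorphic to $\overrightarrow{N}_{n,k}$ for some natural numbers $n,k$ with $2k<n$.
   Context: A digraph is a set $D$ with a binary relation $E(D)\subseteq D\times D$; reflexive means every loop $(x,x)$ is an edge. For $2k\le n$, $\overrightarrow{N}_{n,k}$ is the digraph on $\{1,\dots,n\}$ with edge set $\{(i,j):1\le i,j\le n\}\setminus\{(1,2),(3,4),\dots,(2k-1,2k)\}$. A homomorphism maps edges to edges. Homomorphic image ordering: $A\preceq B$ iff there is a surjective homomorphism $B\to A$. Well quasi-ordered means no infinite strictly decreasing sequence and no infinite antichain; digraphs considered up to isomorphism. *)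

theory Defs
  imports Main
begin

type_synonym 'a digraph = "'a set \<times> ('a \<times> 'a) set"

definition verts :: "'a digraph \<Rightarrow> 'a set" where "verts G = fst G"
definition edges :: "'a digraph \<Rightarrow> ('a \<times> 'a) set" where "edges G = snd G"

definition fin_refl_digraph :: "'a digraph \<Rightarrow> bool" where
  "fin_refl_digraph G \<longleftrightarrow> finite (verts G) \<and> edges G \<subseteq> verts G \<times> verts G
     \<and> (\<forall>x\<in>verts G. (x, x) \<in> edges G)"

definition is_hom :: "('a \<Rightarrow> 'b) \<Rightarrow> 'a digraph \<Rightarrow> 'b digraph \<Rightarrow> bool" where
  "is_hom f G H \<longleftrightarrow> (\<forall>x\<in>verts G. f x \<in> verts H)
     \<and> (\<forall>x y. (x, y) \<in> edges G \<longrightarrow> (f x, f y) \<in> edges H)"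

definition is_surj_hom :: "('a \<Rightarrow> 'b) \<Rightarrow> 'a digraph \<Rightarrow> 'b digraph \<Rightarrow> bool" where
  "is_surj_hom f G H \<longleftrightarrow> is_hom f G H \<and> f ` verts G = verts H"

definition hom_image_le :: "'a digraph \<Rightarrow> 'b digraph \<Rightarrow> bool" where
  "hom_image_le A B \<longleftrightarrow> (\<exists>f. is_surj_hom f B A)"

definition digraph_iso :: "'a digraph \<Rightarrow> 'b digraph \<Rightarrow> bool" where
  "digraph_iso G H \<longleftrightarrow> (\<exists>f. bij_betw f (verts G) (verts H)
     \<and> (\<forall>x\<in>verts G. \<forall>y\<in>verts G. (x, y) \<in> edges G \<longleftrightarrow> (f x, f y) \<in> edges H))"

definition N_digraph :: "nat \<Rightarrow> nat \<Rightarrow> nat digraph" where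
  "N_digraph n k = ({1..n},
     {(i, j). i \<in> {1..n} \<and> j \<in> {1..n}} - {(2*m - 1, 2*m) | m. m \<in> {1..k}})"

text \<open>The class of all finite reflexive digraphs, represented (up to isomorphism)
  by those with vertices in nat.\<close>
definition DR :: "nat digraph set" where
  "DR = {G. fin_refl_digraph G}"

definition Av :: "'a digraph \<Rightarrow> nat digraph set" where
  "Av D = {E \<in> DR. \<not> hom_image_le D E}"

definition wqo_class :: "('b \<Rightarrow> 'b \<Rightarrow> bool) \<Rightarrow> 'b set \<Rightarrow> bool" where
  "wqo_class le C \<longleftrightarrow>
     (\<not> (\<exists>s::nat \<Rightarrow> 'b. (\<forall>i. s i \<in> C) \<and> (\<forall>i. le (s (Suc i)) (s i) \<and> \<not> le (s i) (s (Suc i)))))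
   \<and> (\<not> (\<exists>s::nat \<Rightarrow> 'b. (\<forall>i. s i \<in> C) \<and> (\<forall>i j. i \<noteq> j \<longrightarrow> \<not> le (s i) (s j))))"

end

theory Submission
  imports Defs "HOL-Library.Infinite_Set"
begin

text \<open>A reflexive digraph is determined by its set of non-edges, and the non-edges of
  \<open>N(n,k)\<close> with \<open>2k < n\<close> are exactly \<open>k\<close> vertex-disjoint directed pairs, leaving some vertex on
  no non-edge. These non-edge patterns are inherited by surjective homomorphic images.

  If \<open>D\<close> is not of this form, then \<open>D\<close> is not an image of any member of one of two families
  of digraphs: those whose non-edges form a directed cycle (plus one extra vertex), and those
  whose non-edges form a cycle of alternating orientation. Both families are infinite
  antichains, hence lie in \<open>Av(D)\<close>.

  Conversely, let \<open>D \<cong> N(n,k)\<close> and \<open>E \<in> Av(D)\<close>. A maximal matching of non-edges of \<open>E\<close> has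
  fewer than \<open>k\<close> pairs, since otherwise \<open>E\<close> maps onto \<open>N(n,k)\<close>; so fewer than \<open>n\<close> vertices
  meet all non-edges. Labelling each vertex by its position in this cover, or by its
  non-neighbours in it, uses a finite alphabet and determines the non-edges. By pigeonhole and
  Dickson's lemma every sequence in \<open>Av(D)\<close> has \<open>i < j\<close> with the same label pattern and larger
  label counts at \<open>j\<close>, and then \<open>E\<^sub>j\<close> maps onto \<open>E\<^sub>i\<close> label by label.\<close>

section \<open>Non-edges\<close>

definition nonedges :: "'a digraph \<Rightarrow> ('a \<times> 'a) set" where
  "nonedges G = {(x, y). x \<in> verts G \<and> y \<in> verts G \<and> x \<noteq> y \<and> (x, y) \<notin> edges G}"

lemma nonedges_subset_verts: "nonedges G \<subseteq> verts G \<times> verts G"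
  unfolding nonedges_def by auto

lemma finite_nonedges: "fin_refl_digraph G \<Longrightarrow> finite (nonedges G)"
  using nonedges_subset_verts unfolding fin_refl_digraph_def by (rule finite_subset) blast

lemma edge_iff_not_nonedge:
  assumes "fin_refl_digraph G" "x \<in> verts G" "y \<in> verts G"
  shows "(x, y) \<in> edges G \<longleftrightarrow> (x, y) \<notin> nonedges G"
  using assms unfolding fin_refl_digraph_def nonedges_def by auto

lemma nonedge_lift:
  assumes "is_hom f G D" "x \<in> verts G" "y \<in> verts G" "(f x, f y) \<in> nonedges D"
  shows "(x, y) \<in> nonedges G"
  using assms unfolding is_hom_def nonedges_def by auto

lemma is_surj_hom_iff_nonedges:
  assumes G: "fin_refl_digraph G" and H: "fin_refl_digraph H"
  shows "is_surj_hom f G H \<longleftrightarrow> f ` verts G = verts H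
    \<and> (\<forall>x\<in>verts G. \<forall>y\<in>verts G. (f x, f y) \<in> nonedges H \<longrightarrow> (x, y) \<in> nonedges G)"
    (is "_ \<longleftrightarrow> ?onto \<and> ?lift")
proof
  assume "is_surj_hom f G H"
  then have "is_hom f G H" ?onto unfolding is_surj_hom_def by simp_all
  then show "?onto \<and> ?lift" using nonedge_lift by fast
next
  assume "?onto \<and> ?lift"
  then have onto: ?onto and lift: ?lift by simp_all
  have "(f x, f y) \<in> edges H" if xy: "(x, y) \<in> edges G" for x y
  proof -
    have x: "x \<in> verts G" and y: "y \<in> verts G" using xy G unfolding fin_refl_digraph_def by auto
    then have "f x \<in> verts H" "f y \<in> verts H" using onto by auto
    moreover have "(f x, f y) \<notin> nonedges H"
      using lift x y xy edge_iff_not_nonedge[OF G x y] by blast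
    ultimately show ?thesis using edge_iff_not_nonedge[OF H] by simp
  qed
  then show "is_surj_hom f G H" using onto unfolding is_surj_hom_def is_hom_def by blast
qed

lemma surj_hom_preimage:
  assumes "is_surj_hom f G D" "u \<in> verts D"
  obtains x where "x \<in> verts G" "f x = u"
  using assms unfolding is_surj_hom_def by (metis imageE)

lemma hom_image_le_trans:
  assumes "hom_image_le A B" "hom_image_le B C"
  shows "hom_image_le A C"
proof -
  obtain f g where f: "is_surj_hom f B A" and g: "is_surj_hom g C B"
    using assms unfolding hom_image_le_def by blast
  have "(f \<circ> g) ` verts C = verts A"
    using f g unfolding is_surj_hom_def by (simp only: image_comp[symmetric])
  then have "is_surj_hom (f \<circ> g) C A"
    using f g unfolding is_surj_hom_def is_hom_def by simp
  then show ?thesis unfolding hom_image_le_def by blast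
qed

lemma transp_hom_image_le: "transp hom_image_le"
  by (rule transpI) (rule hom_image_le_trans)

lemma card_verts_le_if_hom_image_le:
  assumes "hom_image_le A B" "finite (verts B)"
  shows "card (verts A) \<le> card (verts B)"
proof -
  obtain f where "f ` verts B = verts A"
    using assms(1) unfolding hom_image_le_def is_surj_hom_def by blast
  then show ?thesis using card_image_le[OF assms(2), of f] by simp
qed

lemma hom_image_le_if_digraph_iso:
  assumes "digraph_iso D G" "fin_refl_digraph G"
  shows "hom_image_le D G"
proof -
  obtain \<phi> where bij: "bij_betw \<phi> (verts D) (verts G)"
    and edges: "\<forall>x\<in>verts D. \<forall>y\<in>verts D. (x, y) \<in> edges D \<longleftrightarrow> (\<phi> x, \<phi> y) \<in> edges G"
    using assms(1) unfolding digraph_iso_def by blast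
  define \<psi> where "\<psi> = inv_into (verts D) \<phi>"
  have bij': "bij_betw \<psi> (verts G) (verts D)"
    unfolding \<psi>_def using bij by (rule bij_betw_inv_into)
  have inv: "\<phi> (\<psi> i) = i" if "i \<in> verts G" for i
    unfolding \<psi>_def using that bij by (simp add: bij_betw_def f_inv_into_f)
  have "(\<psi> i, \<psi> j) \<in> edges D" if "(i, j) \<in> edges G" for i j
  proof -
    have "i \<in> verts G" "j \<in> verts G" using that assms(2) unfolding fin_refl_digraph_def by auto
    then show ?thesis using that edges bij_betwE[OF bij'] inv by metis
  qed
  then have "is_surj_hom \<psi> G D"
    using bij' unfolding is_surj_hom_def is_hom_def bij_betw_def by blast
  then show ?thesis unfolding hom_image_le_def by blast
qed

definition co_digraph :: "'a set \<Rightarrow> ('a \<times> 'a) set \<Rightarrow> 'a digraph" where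
  "co_digraph V R = (V, V \<times> V - R)"

lemma verts_co_digraph [simp]: "verts (co_digraph V R) = V"
  and edges_co_digraph [simp]: "edges (co_digraph V R) = V \<times> V - R"
  unfolding co_digraph_def verts_def edges_def by simp_all

lemma fin_refl_co_digraph: "finite V \<Longrightarrow> irrefl R \<Longrightarrow> fin_refl_digraph (co_digraph V R)"
  unfolding fin_refl_digraph_def irrefl_def by auto

lemma nonedges_co_digraph: "R \<subseteq> V \<times> V \<Longrightarrow> irrefl R \<Longrightarrow> nonedges (co_digraph V R) = R"
  unfolding nonedges_def irrefl_def by auto

lemma N_digraph_eq_co_digraph:
  "N_digraph n k = co_digraph {1..n} {(2*p + 1, 2*p + 2) | p. p < k}"
proof -
  have "{(2*m - 1, 2*m) | m. m \<in> {1..k}} = {(2*p + 1, 2*p + 2) | p. p < k}"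
  proof (intro equalityI subsetI)
    fix e assume "e \<in> {(2*m - 1, 2*m) | m. m \<in> {1..k}}"
    then obtain m where "e = (2*m - 1, 2*m)" "1 \<le> m" "m \<le> k" by auto
    then show "e \<in> {(2*p + 1, 2*p + 2) | p. p < k}" by (intro CollectI exI[of _ "m - 1"]) auto
  next
    fix e assume "e \<in> {(2*p + 1, 2*p + 2) | p. p < k}"
    then obtain p where "e = (2*p + 1, 2*p + 2)" "p < k" by auto
    then show "e \<in> {(2*m - 1, 2*m) | m. m \<in> {1..k}}" by (intro CollectI exI[of _ "p + 1"]) auto
  qed
  then show ?thesis unfolding N_digraph_def co_digraph_def by auto
qed

lemma irrefl_N_digraph_nonedges: "irrefl {(2*p + 1, 2*p + 2) | p::nat. p < k}"
  unfolding irrefl_def by auto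

lemma fin_refl_N_digraph: "fin_refl_digraph (N_digraph n k)"
  unfolding N_digraph_eq_co_digraph
  by (rule fin_refl_co_digraph[OF _ irrefl_N_digraph_nonedges]) simp

lemma verts_N_digraph: "verts (N_digraph n k) = {1..n}"
  unfolding N_digraph_eq_co_digraph by simp

lemma nonedges_N_digraph:
  "2*k \<le> n \<Longrightarrow> nonedges (N_digraph n k) = {(2*p + 1, 2*p + 2) | p. p < k}"
  unfolding N_digraph_eq_co_digraph by (intro nonedges_co_digraph[OF _ irrefl_N_digraph_nonedges]) auto

section \<open>Non-edge patterns of homomorphic images\<close>

lemma single_valued_nonedges_if_hom_image_le:
  assumes "hom_image_le D G" "single_valued (nonedges G)"
  shows "single_valued (nonedges D)"
proof (rule single_valuedI)
  fix u v v' assume uv: "(u, v) \<in> nonedges D" and uv': "(u, v') \<in> nonedges D"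
  obtain f where f: "is_surj_hom f G D" using assms(1) unfolding hom_image_le_def by blast
  then have hom: "is_hom f G D" unfolding is_surj_hom_def by simp
  obtain x y y' where "x \<in> verts G" "f x = u" "y \<in> verts G" "f y = v" "y' \<in> verts G" "f y' = v'"
    using uv uv' nonedges_subset_verts surj_hom_preimage[OF f] by (metis SigmaD1 SigmaD2 subsetD)
  with uv uv' have "(x, y) \<in> nonedges G" "(x, y') \<in> nonedges G"
    using nonedge_lift[OF hom] by simp_all
  with assms(2) \<open>f y = v\<close> \<open>f y' = v'\<close> show "v = v'" by (metis single_valuedD)
qed

lemma single_valued_converse_nonedges_if_hom_image_le:
  assumes "hom_image_le D G" "single_valued ((nonedges G)\<inverse>)"
  shows "single_valued ((nonedges D)\<inverse>)"
proof (rule single_valuedI)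
  fix v u u' assume "(v, u) \<in> (nonedges D)\<inverse>" "(v, u') \<in> (nonedges D)\<inverse>"
  then have uv: "(u, v) \<in> nonedges D" and uv': "(u', v) \<in> nonedges D" by simp_all
  obtain f where f: "is_surj_hom f G D" using assms(1) unfolding hom_image_le_def by blast
  then have hom: "is_hom f G D" unfolding is_surj_hom_def by simp
  obtain x x' y where "x \<in> verts G" "f x = u" "x' \<in> verts G" "f x' = u'" "y \<in> verts G" "f y = v"
    using uv uv' nonedges_subset_verts surj_hom_preimage[OF f] by (metis SigmaD1 SigmaD2 subsetD)
  with uv uv' have "(y, x) \<in> (nonedges G)\<inverse>" "(y, x') \<in> (nonedges G)\<inverse>"
    using nonedge_lift[OF hom] by simp_all
  with assms(2) \<open>f x = u\<close> \<open>f x' = u'\<close> show "u = u'" by (metis single_valuedD)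
qed

lemma nonedge_paths_empty_if_hom_image_le:
  assumes "hom_image_le D G" "nonedges G O nonedges G = {}"
  shows "nonedges D O nonedges D = {}"
proof (rule ccontr)
  assume "nonedges D O nonedges D \<noteq> {}"
  then obtain u v w where uv: "(u, v) \<in> nonedges D" and vw: "(v, w) \<in> nonedges D" by blast
  obtain f where f: "is_surj_hom f G D" using assms(1) unfolding hom_image_le_def by blast
  then have hom: "is_hom f G D" unfolding is_surj_hom_def by simp
  obtain x y z where "x \<in> verts G" "f x = u" "y \<in> verts G" "f y = v" "z \<in> verts G" "f z = w"
    using uv vw nonedges_subset_verts surj_hom_preimage[OF f] by (metis SigmaD1 SigmaD2 subsetD)
  with uv vw have "(x, y) \<in> nonedges G" "(y, z) \<in> nonedges G"
    using nonedge_lift[OF hom] by simp_all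
  with assms(2) show False by blast
qed

lemma verts_subset_Field_nonedges_if_hom_image_le:
  assumes "hom_image_le D G" "verts D \<subseteq> Field (nonedges D)"
  shows "verts G \<subseteq> Field (nonedges G)"
proof
  fix x assume x: "x \<in> verts G"
  obtain f where f: "is_surj_hom f G D" using assms(1) unfolding hom_image_le_def by blast
  then have hom: "is_hom f G D" and fx: "f x \<in> verts D"
    using x unfolding is_surj_hom_def is_hom_def by simp_all
  then consider v where "(f x, v) \<in> nonedges D" | v where "(v, f x) \<in> nonedges D"
    using assms(2) unfolding Field_def by blast
  then show "x \<in> Field (nonedges G)"
  proof cases
    case (1 v)
    then obtain y where "y \<in> verts G" "f y = v"
      using nonedges_subset_verts surj_hom_preimage[OF f] by blast
    then have "(x, y) \<in> nonedges G" using 1 nonedge_lift[OF hom x] by simp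
    then show ?thesis unfolding Field_def by blast
  next
    case (2 v)
    then obtain y where "y \<in> verts G" "f y = v"
      using nonedges_subset_verts surj_hom_preimage[OF f] by blast
    then have "(y, x) \<in> nonedges G" using 2 nonedge_lift[OF hom _ x] by simp
    then show ?thesis unfolding Field_def by blast
  qed
qed

section \<open>Two antichains of cyclic digraphs\<close>

definition cyc_succ :: "nat \<Rightarrow> nat \<Rightarrow> nat" where
  "cyc_succ N x = (if Suc x = N then 0 else Suc x)"

definition cyc_pred :: "nat \<Rightarrow> nat \<Rightarrow> nat" where
  "cyc_pred N x = (if x = 0 then N - 1 else x - 1)"

lemma cyc_succ_less: "x < N \<Longrightarrow> cyc_succ N x < N"
  and cyc_pred_less: "x < N \<Longrightarrow> cyc_pred N x < N"
  and cyc_succ_pred: "x < N \<Longrightarrow> cyc_succ N (cyc_pred N x) = x"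
  and cyc_pred_succ: "x < N \<Longrightarrow> cyc_pred N (cyc_succ N x) = x"
  unfolding cyc_succ_def cyc_pred_def by auto

lemma cyc_succ_neq: "2 \<le> N \<Longrightarrow> cyc_succ N x \<noteq> x"
  and cyc_pred_neq: "2 \<le> N \<Longrightarrow> x < N \<Longrightarrow> cyc_pred N x \<noteq> x"
  and cyc_succ_neq_pred: "3 \<le> N \<Longrightarrow> x < N \<Longrightarrow> cyc_succ N x \<noteq> cyc_pred N x"
  unfolding cyc_succ_def cyc_pred_def by auto

lemma even_cyc_succ: "even N \<Longrightarrow> x < N \<Longrightarrow> even (cyc_succ N x) \<longleftrightarrow> odd x"
  unfolding cyc_succ_def by (cases "Suc x = N") (simp_all, presburger)

lemma even_cyc_pred: "even N \<Longrightarrow> x < N \<Longrightarrow> even (cyc_pred N x) \<longleftrightarrow> odd x"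
  unfolding cyc_pred_def by (cases x) auto

lemma cyc_succ_mod: "cyc_succ N (a mod N) = Suc a mod N"
  unfolding cyc_succ_def by (simp add: mod_Suc)

lemma cyc_closed_eq:
  assumes x0: "x0 \<in> S" and S: "S \<subseteq> {..<N}" and closed: "\<And>x. x \<in> S \<Longrightarrow> cyc_succ N x \<in> S"
  shows "S = {..<N}"
proof -
  have "x0 < N" using x0 S by auto
  have orbit: "(x0 + t) mod N \<in> S" for t
  proof (induction t)
    case 0 then show ?case using x0 \<open>x0 < N\<close> by simp
  next
    case (Suc t) then show ?case using closed[of "(x0 + t) mod N"] by (simp add: cyc_succ_mod)
  qed
  have "z \<in> S" if "z < N" for z
    using orbit[of "N - x0 + z"] \<open>x0 < N\<close> that by simp
  then show ?thesis using S by auto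
qed

text \<open>Applied to a surjective homomorphism between two cyclic digraphs: the preimage of the
  shorter cycle contains the whole longer cycle, and the map is injective on it.\<close>
lemma cyc_length_le:
  assumes "0 < Na" and onto: "{..<Na} \<subseteq> f ` V"
    and closed: "\<And>x. x \<in> V \<Longrightarrow> f x < Na \<Longrightarrow> x < Nb \<and> cyc_succ Nb x \<in> V \<and> f (cyc_succ Nb x) < Na"
    and unique: "\<And>x y y'. x \<in> V \<Longrightarrow> f x < Na \<Longrightarrow> y \<in> V \<Longrightarrow> y' \<in> V
      \<Longrightarrow> f y = cyc_succ Na (f x) \<Longrightarrow> f y' = cyc_succ Na (f x) \<Longrightarrow> y = y'"
  shows "Nb \<le> Na"
proof -
  define S where "S = {x \<in> V. f x < Na}"
  have "0 \<in> f ` V" using onto \<open>0 < Na\<close> by (simp add: subset_eq)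
  then obtain x0 where "x0 \<in> V" "f x0 = 0" by (rule imageE) simp
  have "S = {..<Nb}"
  proof (rule cyc_closed_eq)
    show "x0 \<in> S" using \<open>x0 \<in> V\<close> \<open>f x0 = 0\<close> \<open>0 < Na\<close> unfolding S_def by simp
    show "S \<subseteq> {..<Nb}" using closed unfolding S_def by auto
    show "cyc_succ Nb x \<in> S" if "x \<in> S" for x using closed that unfolding S_def by simp
  qed
  moreover have "inj_on f S"
  proof (rule inj_onI)
    fix x x' assume x: "x \<in> S" and x': "x' \<in> S" and eq: "f x = f x'"
    have "cyc_pred Na (f x) \<in> f ` V" using onto cyc_pred_less x unfolding S_def by (simp add: subset_eq)
    then obtain w where w: "w \<in> V" "f w = cyc_pred Na (f x)" by (rule imageE) simp
    moreover have "f x < Na" using x unfolding S_def by simp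
    ultimately have "f w < Na" "cyc_succ Na (f w) = f x" using cyc_pred_less cyc_succ_pred by simp_all
    then show "x = x'" using unique[OF w(1)] x x' eq unfolding S_def by simp
  qed
  moreover have "f ` S \<subseteq> {..<Na}" unfolding S_def by auto
  ultimately have "card {..<Nb} \<le> card {..<Na}" using card_inj_on_le[of f S "{..<Na}"] by simp
  then show ?thesis by simp
qed

definition co_cycle :: "nat \<Rightarrow> nat digraph" where
  "co_cycle m = co_digraph {0..m} {(x, y). x < m \<and> y = cyc_succ m x}"

lemma co_cycle_facts:
  assumes "2 \<le> m"
  shows "fin_refl_digraph (co_cycle m)" "verts (co_cycle m) = {0..m}"
    "nonedges (co_cycle m) = {(x, y). x < m \<and> y = cyc_succ m x}"
proof -
  have irr: "irrefl {(x, y). x < m \<and> y = cyc_succ m x}"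
    unfolding irrefl_def using cyc_succ_neq[OF assms] by (simp add: eq_commute)
  show "fin_refl_digraph (co_cycle m)"
    unfolding co_cycle_def by (rule fin_refl_co_digraph[OF _ irr]) simp
  show "verts (co_cycle m) = {0..m}" unfolding co_cycle_def by simp
  have "{(x, y). x < m \<and> y = cyc_succ m x} \<subseteq> {0..m} \<times> {0..m}"
    using cyc_succ_less by (auto simp: less_imp_le)
  then show "nonedges (co_cycle m) = {(x, y). x < m \<and> y = cyc_succ m x}"
    unfolding co_cycle_def by (rule nonedges_co_digraph[OF _ irr])
qed

lemma co_cycle_nonedges_props:
  assumes "2 \<le> m"
  shows "single_valued (nonedges (co_cycle m))" "single_valued ((nonedges (co_cycle m))\<inverse>)"
    "\<not> verts (co_cycle m) \<subseteq> Field (nonedges (co_cycle m))"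
proof -
  note facts = co_cycle_facts[OF assms]
  show "single_valued (nonedges (co_cycle m))"
    unfolding facts(3) single_valued_def by simp
  show "single_valued ((nonedges (co_cycle m))\<inverse>)"
    unfolding facts(3) single_valued_def by (auto dest: arg_cong[of _ _ "cyc_pred m"] simp: cyc_pred_succ)
  have "x < m \<and> y < m" if "(x, y) \<in> nonedges (co_cycle m)" for x y
    using that cyc_succ_less unfolding facts(3) by auto
  then have "m \<notin> Field (nonedges (co_cycle m))" unfolding Field_def by blast
  then show "\<not> verts (co_cycle m) \<subseteq> Field (nonedges (co_cycle m))" unfolding facts(2) by auto
qed

lemma co_cycle_antichain:
  assumes "2 \<le> a" "a < b"
  shows "\<not> hom_image_le (co_cycle a) (co_cycle b)"
proof
  assume "hom_image_le (co_cycle a) (co_cycle b)"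
  then obtain f where f: "is_surj_hom f (co_cycle b) (co_cycle a)" unfolding hom_image_le_def by blast
  note A = co_cycle_facts[OF assms(1)] and B = co_cycle_facts[of b]
  have "2 \<le> b" using assms by simp
  have onto: "f ` {0..b} = {0..a}" using f A(2) B(2)[OF \<open>2 \<le> b\<close>] unfolding is_surj_hom_def by simp
  have hom: "is_hom f (co_cycle b) (co_cycle a)" using f unfolding is_surj_hom_def by simp
  have lift: "x < b \<and> z = cyc_succ b x"
    if "x \<in> {0..b}" "z \<in> {0..b}" "f x < a" "f z = cyc_succ a (f x)" for x z
  proof -
    have "(f x, f z) \<in> nonedges (co_cycle a)" using that unfolding A(3) by simp
    then have "(x, z) \<in> nonedges (co_cycle b)"
      using nonedge_lift[OF hom] that B(2)[OF \<open>2 \<le> b\<close>] by simp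
    then show ?thesis unfolding B(3)[OF \<open>2 \<le> b\<close>] by simp
  qed
  have "b \<le> a"
  proof (rule cyc_length_le[where f = f and V = "{0..b}"])
    show "0 < a" using assms by simp
    show "{..<a} \<subseteq> f ` {0..b}" unfolding onto by auto
  next
    fix x assume x: "x \<in> {0..b}" "f x < a"
    have "cyc_succ a (f x) \<in> f ` {0..b}" unfolding onto using cyc_succ_less[OF x(2)] by simp
    then obtain z where "z \<in> {0..b}" "f z = cyc_succ a (f x)" by (rule imageE) simp
    then show "x < b \<and> cyc_succ b x \<in> {0..b} \<and> f (cyc_succ b x) < a"
      using lift[of x z] x cyc_succ_less[OF x(2)] cyc_succ_less[of x b] by auto
  next
    fix x y y' assume "x \<in> {0..b}" "f x < a" "y \<in> {0..b}" "y' \<in> {0..b}"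
      "f y = cyc_succ a (f x)" "f y' = cyc_succ a (f x)"
    then have "y = cyc_succ b x" "y' = cyc_succ b x" using lift by blast+
    then show "y = y'" by simp
  qed
  then show False using assms by simp
qed

definition cyc_adj :: "nat \<Rightarrow> nat \<Rightarrow> nat \<Rightarrow> bool" where
  "cyc_adj N x y \<longleftrightarrow> x < N \<and> (y = cyc_succ N x \<or> y = cyc_pred N x)"

lemma cyc_adj_less: "cyc_adj N x y \<Longrightarrow> x < N \<and> y < N"
  unfolding cyc_adj_def using cyc_succ_less cyc_pred_less by auto

lemma cyc_adj_sym: "cyc_adj N x y \<Longrightarrow> cyc_adj N y x"
  unfolding cyc_adj_def using cyc_succ_less cyc_pred_less cyc_pred_succ cyc_succ_pred by metis

lemma even_cyc_adj: "even N \<Longrightarrow> cyc_adj N x y \<Longrightarrow> even y \<longleftrightarrow> odd x"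
  unfolding cyc_adj_def using even_cyc_succ even_cyc_pred by auto

definition co_alt_cycle :: "nat \<Rightarrow> nat digraph" where
  "co_alt_cycle m = co_digraph {0..2*m} {(x, y). even x \<and> cyc_adj (2*m) x y}"

lemma co_alt_cycle_facts:
  assumes "1 \<le> m"
  shows "fin_refl_digraph (co_alt_cycle m)" "verts (co_alt_cycle m) = {0..2*m}"
    "nonedges (co_alt_cycle m) = {(x, y). even x \<and> cyc_adj (2*m) x y}"
proof -
  have irr: "irrefl {(x, y). even x \<and> cyc_adj (2*m) x y}"
    unfolding irrefl_def cyc_adj_def using assms cyc_succ_neq[of "2*m"] cyc_pred_neq[of "2*m"]
    by (simp add: eq_commute)
  show "fin_refl_digraph (co_alt_cycle m)"
    unfolding co_alt_cycle_def by (rule fin_refl_co_digraph[OF _ irr]) simp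
  show "verts (co_alt_cycle m) = {0..2*m}" unfolding co_alt_cycle_def by simp
  have "{(x, y). even x \<and> cyc_adj (2*m) x y} \<subseteq> {0..2*m} \<times> {0..2*m}"
    using cyc_adj_less by (auto simp: less_imp_le)
  then show "nonedges (co_alt_cycle m) = {(x, y). even x \<and> cyc_adj (2*m) x y}"
    unfolding co_alt_cycle_def by (rule nonedges_co_digraph[OF _ irr])
qed

lemma co_alt_cycle_nonedge_paths:
  assumes "1 \<le> m"
  shows "nonedges (co_alt_cycle m) O nonedges (co_alt_cycle m) = {}"
  unfolding co_alt_cycle_facts(3)[OF assms] using even_cyc_adj[of "2*m"] by auto

lemma cyc_adj_lift_co_alt_cycle:
  assumes hom: "is_hom f (co_alt_cycle b) (co_alt_cycle a)" and "1 \<le> a" "1 \<le> b"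
    and xz: "x \<in> {0..2*b}" "z \<in> {0..2*b}" and adj: "cyc_adj (2*a) (f x) (f z)"
  shows "cyc_adj (2*b) x z"
proof -
  note A = co_alt_cycle_facts[OF \<open>1 \<le> a\<close>] and B = co_alt_cycle_facts[OF \<open>1 \<le> b\<close>]
  show ?thesis
  proof (cases "even (f x)")
    case True
    then have "(f x, f z) \<in> nonedges (co_alt_cycle a)" using adj unfolding A(3) by simp
    then have "(x, z) \<in> nonedges (co_alt_cycle b)" using nonedge_lift[OF hom] xz B(2) by simp
    then show ?thesis unfolding B(3) by simp
  next
    case False
    then have "(f z, f x) \<in> nonedges (co_alt_cycle a)"
      using adj cyc_adj_sym even_cyc_adj[of "2*a"] unfolding A(3) by simp
    then have "(z, x) \<in> nonedges (co_alt_cycle b)" using nonedge_lift[OF hom] xz B(2) by simp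
    then show ?thesis unfolding B(3) using cyc_adj_sym by simp
  qed
qed

lemma co_alt_cycle_lift_neighbour:
  assumes f: "is_surj_hom f (co_alt_cycle b) (co_alt_cycle a)" and "1 \<le> a" "1 \<le> b"
    and x: "x \<in> {0..2*b}" and adj: "cyc_adj (2*a) (f x) v"
  obtains y where "y \<in> {0..2*b}" "f y = v" "cyc_adj (2*b) x y"
proof -
  have "f ` {0..2*b} = {0..2*a}"
    using f co_alt_cycle_facts(2)[OF \<open>1 \<le> a\<close>] co_alt_cycle_facts(2)[OF \<open>1 \<le> b\<close>]
    unfolding is_surj_hom_def by simp
  moreover have "v \<in> {0..2*a}" using cyc_adj_less[OF adj] by simp
  ultimately obtain y where y: "y \<in> {0..2*b}" "f y = v" by (metis imageE)
  have "is_hom f (co_alt_cycle b) (co_alt_cycle a)" using f unfolding is_surj_hom_def by simp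
  then have "cyc_adj (2*b) x y" using cyc_adj_lift_co_alt_cycle \<open>1 \<le> a\<close> \<open>1 \<le> b\<close> x y adj by simp
  with y show ?thesis using that by blast
qed

lemma co_alt_cycle_antichain:
  assumes "2 \<le> a" "a < b"
  shows "\<not> hom_image_le (co_alt_cycle a) (co_alt_cycle b)"
proof
  assume "hom_image_le (co_alt_cycle a) (co_alt_cycle b)"
  then obtain f where f: "is_surj_hom f (co_alt_cycle b) (co_alt_cycle a)"
    unfolding hom_image_le_def by blast
  have "1 \<le> a" "1 \<le> b" using assms by simp_all
  note lift = co_alt_cycle_lift_neighbour[OF f \<open>1 \<le> a\<close> \<open>1 \<le> b\<close>]
  have onto: "f ` {0..2*b} = {0..2*a}"
    using f co_alt_cycle_facts(2)[OF \<open>1 \<le> a\<close>] co_alt_cycle_facts(2)[OF \<open>1 \<le> b\<close>]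
    unfolding is_surj_hom_def by simp
  have nbrs: "\<exists>y2. y2 \<in> {0..2*b} \<and> f y2 \<noteq> cyc_succ (2*a) (f x) \<and> f y2 < 2*a \<and> cyc_adj (2*b) x y2"
    if x: "x \<in> {0..2*b}" "f x < 2*a" for x
  proof -
    obtain y2 where "y2 \<in> {0..2*b}" "f y2 = cyc_pred (2*a) (f x)" "cyc_adj (2*b) x y2"
      using lift[OF x(1)] x(2) unfolding cyc_adj_def by blast
    moreover have "cyc_pred (2*a) (f x) \<noteq> cyc_succ (2*a) (f x)"
      using cyc_succ_neq_pred[of "2*a" "f x"] x(2) assms by simp
    ultimately show ?thesis using cyc_pred_less[OF x(2)] by auto
  qed
  have "2*b \<le> 2*a"
  proof (rule cyc_length_le[where f = f and V = "{0..2*b}"])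
    show "0 < 2*a" using assms by simp
    show "{..<2*a} \<subseteq> f ` {0..2*b}" unfolding onto by auto
  next
    fix x assume x: "x \<in> {0..2*b}" "f x < 2*a"
    obtain y1 where y1: "y1 \<in> {0..2*b}" "f y1 = cyc_succ (2*a) (f x)" "cyc_adj (2*b) x y1"
      using lift[OF x(1)] x(2) unfolding cyc_adj_def by blast
    obtain y2 where y2: "f y2 \<noteq> cyc_succ (2*a) (f x)" "f y2 < 2*a" "cyc_adj (2*b) x y2"
      using nbrs[OF x] by blast
    have "x < 2*b" using y1(3) unfolding cyc_adj_def by simp
    moreover have "cyc_succ (2*b) x = y1 \<or> cyc_succ (2*b) x = y2"
      using y1 y2 unfolding cyc_adj_def by auto
    ultimately show "x < 2*b \<and> cyc_succ (2*b) x \<in> {0..2*b} \<and> f (cyc_succ (2*b) x) < 2*a"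
      using y1 y2 cyc_succ_less[OF x(2)] cyc_succ_less[of x "2*b"] by auto
  next
    fix x y y' assume x: "x \<in> {0..2*b}" "f x < 2*a" and "y \<in> {0..2*b}" "y' \<in> {0..2*b}"
      and fy: "f y = cyc_succ (2*a) (f x)" "f y' = cyc_succ (2*a) (f x)"
    have hom: "is_hom f (co_alt_cycle b) (co_alt_cycle a)" using f unfolding is_surj_hom_def by simp
    have "cyc_adj (2*a) (f x) (f y)" "cyc_adj (2*a) (f x) (f y')" using x(2) fy unfolding cyc_adj_def by simp_all
    then have "cyc_adj (2*b) x y" "cyc_adj (2*b) x y'"
      using cyc_adj_lift_co_alt_cycle[OF hom \<open>1 \<le> a\<close> \<open>1 \<le> b\<close>] x(1) \<open>y \<in> _\<close> \<open>y' \<in> _\<close> by blast+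
    moreover obtain y2 where "f y2 \<noteq> cyc_succ (2*a) (f x)" "cyc_adj (2*b) x y2" using nbrs[OF x] by blast
    moreover from this(1) have "y \<noteq> y2" "y' \<noteq> y2" using fy by auto
    ultimately show "y = y'" unfolding cyc_adj_def by auto
  qed
  then show False using assms by simp
qed

lemma not_wqo_class_if_antichain:
  fixes G :: "nat \<Rightarrow> 'a digraph"
  assumes mem: "\<And>m. 2 \<le> m \<Longrightarrow> G m \<in> C" and fin: "\<And>m. 2 \<le> m \<Longrightarrow> finite (verts (G m))"
    and incomparable: "\<And>a b. 2 \<le> a \<Longrightarrow> a < b \<Longrightarrow> \<not> hom_image_le (G a) (G b)"
    and growing: "\<And>a b. 2 \<le> a \<Longrightarrow> a < b \<Longrightarrow> card (verts (G a)) < card (verts (G b))"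
  shows "\<not> wqo_class hom_image_le C"
proof -
  define s where "s i = G (i + 2)" for i
  have "\<not> hom_image_le (s i) (s j)" if "i \<noteq> j" for i j
  proof (cases "i < j")
    case True then show ?thesis unfolding s_def using incomparable by simp
  next
    case False
    then have "card (verts (s j)) < card (verts (s i))" using that growing unfolding s_def by simp
    then show ?thesis using card_verts_le_if_hom_image_le fin unfolding s_def by fastforce
  qed
  moreover have "s i \<in> C" for i unfolding s_def using mem by simp
  ultimately show ?thesis unfolding wqo_class_def by blast
qed

lemma nonedge_shape_if_wqo_Av:
  assumes wqo: "wqo_class hom_image_le (Av D)"
  shows "single_valued (nonedges D)" "single_valued ((nonedges D)\<inverse>)"
    "\<not> verts D \<subseteq> Field (nonedges D)" "nonedges D O nonedges D = {}"
proof -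
  have "\<exists>m\<ge>2. hom_image_le D (co_cycle m)"
  proof (rule ccontr)
    assume "\<not> (\<exists>m\<ge>2. hom_image_le D (co_cycle m))"
    then have "\<not> wqo_class hom_image_le (Av D)"
      using co_cycle_facts co_cycle_antichain
      by (intro not_wqo_class_if_antichain[where G = co_cycle]) (auto simp: Av_def DR_def)
    then show False using wqo by simp
  qed
  then obtain m where "2 \<le> m" "hom_image_le D (co_cycle m)" by blast
  then show "single_valued (nonedges D)" "single_valued ((nonedges D)\<inverse>)"
    "\<not> verts D \<subseteq> Field (nonedges D)"
    using co_cycle_nonedges_props single_valued_nonedges_if_hom_image_le
      single_valued_converse_nonedges_if_hom_image_le verts_subset_Field_nonedges_if_hom_image_le
    by blast+
  have "\<exists>m\<ge>2. hom_image_le D (co_alt_cycle m)"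
  proof (rule ccontr)
    assume "\<not> (\<exists>m\<ge>2. hom_image_le D (co_alt_cycle m))"
    then have "\<not> wqo_class hom_image_le (Av D)"
      using co_alt_cycle_facts co_alt_cycle_antichain
      by (intro not_wqo_class_if_antichain[where G = co_alt_cycle]) (auto simp: Av_def DR_def)
    then show False using wqo by simp
  qed
  then obtain m' where "2 \<le> m'" "hom_image_le D (co_alt_cycle m')" by blast
  then show "nonedges D O nonedges D = {}"
    using co_alt_cycle_nonedge_paths[of m'] nonedge_paths_empty_if_hom_image_le by simp
qed

section \<open>Recognising N(n,k)\<close>

definition interleave :: "(nat \<Rightarrow> 'a) \<Rightarrow> (nat \<Rightarrow> 'a) \<Rightarrow> nat \<Rightarrow> 'a" where
  "interleave a b i = (if odd i then a (i div 2) else b (i div 2 - 1))"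

lemma atLeastAtMost_1_double:
  "{1..2*k} = (\<lambda>p::nat. 2*p + 1) ` {..<k} \<union> (\<lambda>p. 2*p + 2) ` {..<k}"
proof (intro equalityI subsetI)
  fix i assume i: "i \<in> {1..2*k}"
  show "i \<in> (\<lambda>p. 2*p + 1) ` {..<k} \<union> (\<lambda>p. 2*p + 2) ` {..<k}"
  proof (cases "odd i")
    case True
    then have i_eq: "i = 2 * (i div 2) + 1" by simp
    moreover have "i \<le> 2*k" using i by simp
    ultimately have "i div 2 < k" by linarith
    with i_eq show ?thesis by blast
  next
    case False
    then have "i = 2 * (i div 2 - 1) + 2" "i div 2 - 1 < k" using i by auto
    then show ?thesis by blast
  qed
qed auto

lemma bij_betw_interleave:
  assumes a: "bij_betw a {..<k} A" and b: "bij_betw b {..<k} B" and "A \<inter> B = {}"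
  shows "bij_betw (interleave a b) {1..2*k} (A \<union> B)"
proof -
  have "bij_betw (interleave a b) ((\<lambda>p. 2*p + 1) ` {..<k}) A"
    using bij_betw_comp_iff[of "\<lambda>p. 2*p + 1" "{..<k}" _ "interleave a b" A] a
    by (simp add: bij_betw_imageI inj_on_def comp_def interleave_def)
  moreover have "bij_betw (interleave a b) ((\<lambda>p. 2*p + 2) ` {..<k}) B"
    using bij_betw_comp_iff[of "\<lambda>p. 2*p + 2" "{..<k}" _ "interleave a b" B] b
    by (simp add: bij_betw_imageI inj_on_def comp_def interleave_def)
  ultimately show ?thesis
    unfolding atLeastAtMost_1_double using assms(3) by (rule bij_betw_combine)
qed

lemma bij_betw_fst_Domain: "single_valued R \<Longrightarrow> bij_betw fst R (Domain R)"
  unfolding bij_betw_def inj_on_def Domain_fst single_valued_def by (auto simp: prod_eq_iff)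

lemma bij_betw_snd_Range: "single_valued (R\<inverse>) \<Longrightarrow> bij_betw snd R (Range R)"
  unfolding bij_betw_def inj_on_def Range_snd single_valued_def by (auto simp: prod_eq_iff)

lemma digraph_iso_if_bij_nonedges:
  assumes G: "fin_refl_digraph G" and H: "fin_refl_digraph H"
    and bij: "bij_betw \<psi> (verts H) (verts G)" and ne: "map_prod \<psi> \<psi> ` nonedges H = nonedges G"
  shows "digraph_iso G H"
proof -
  define \<phi> where "\<phi> = inv_into (verts H) \<psi>"
  have bij': "bij_betw \<phi> (verts G) (verts H)" unfolding \<phi>_def using bij by (rule bij_betw_inv_into)
  have \<psi>\<phi>: "\<psi> (\<phi> x) = x" if "x \<in> verts G" for x
    unfolding \<phi>_def using that bij by (simp add: bij_betw_def f_inv_into_f)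
  have inj: "inj_on (map_prod \<psi> \<psi>) (verts H \<times> verts H)"
    using bij unfolding bij_betw_def by (simp add: map_prod_inj_on)
  have "(x, y) \<in> edges G \<longleftrightarrow> (\<phi> x, \<phi> y) \<in> edges H" if x: "x \<in> verts G" and y: "y \<in> verts G" for x y
  proof -
    have \<phi>xy: "\<phi> x \<in> verts H" "\<phi> y \<in> verts H" using bij' x y by (simp_all add: bij_betwE)
    have "(x, y) \<in> edges G \<longleftrightarrow> map_prod \<psi> \<psi> (\<phi> x, \<phi> y) \<notin> map_prod \<psi> \<psi> ` nonedges H"
      using edge_iff_not_nonedge[OF G x y] ne \<psi>\<phi> x y by simp
    also have "\<dots> \<longleftrightarrow> (\<phi> x, \<phi> y) \<notin> nonedges H"
      using inj_on_image_mem_iff[OF inj _ nonedges_subset_verts, of "(\<phi> x, \<phi> y)"] \<phi>xy by simp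
    also have "\<dots> \<longleftrightarrow> (\<phi> x, \<phi> y) \<in> edges H" using edge_iff_not_nonedge[OF H \<phi>xy] by simp
    finally show ?thesis .
  qed
  then show ?thesis unfolding digraph_iso_def using bij' by blast
qed

lemma ex_enumeration_of_matching:
  assumes sv: "single_valued R" and sv': "single_valued (R\<inverse>)" and no_paths: "R O R = {}"
    and fin: "finite R" "finite F" and disj: "Field R \<inter> F = {}"
  obtains \<psi> :: "nat \<Rightarrow> 'a" where "bij_betw \<psi> {1..2 * card R + card F} (Field R \<union> F)"
    "map_prod \<psi> \<psi> ` {(2*p + 1, 2*p + 2) | p. p < card R} = R"
proof -
  define k where "k = card R"
  define c where "c = card F"
  obtain e where e: "bij_betw e {..<k} R"
    using ex_bij_betw_nat_finite[OF fin(1)] unfolding k_def lessThan_atLeast0 by blast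
  obtain g where g: "bij_betw g {..<c} F"
    using ex_bij_betw_nat_finite[OF fin(2)] unfolding c_def lessThan_atLeast0 by blast
  define \<psi> where "\<psi> i = (if i \<le> 2*k then interleave (fst \<circ> e) (snd \<circ> e) i else g (i - Suc (2*k)))" for i
  have "bij_betw (interleave (fst \<circ> e) (snd \<circ> e)) {1..2*k} (Domain R \<union> Range R)"
    using bij_betw_trans[OF e bij_betw_fst_Domain] bij_betw_trans[OF e bij_betw_snd_Range] sv sv' no_paths
    by (intro bij_betw_interleave) auto
  then have low: "bij_betw \<psi> {1..2*k} (Field R)"
    unfolding Field_def \<psi>_def by (rule bij_betw_cong[THEN iffD1, rotated]) simp
  have "bij_betw (\<lambda>i. i - Suc (2*k)) {Suc (2*k)..2*k + c} {..<c}"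
    by (rule bij_betw_byWitness[where f' = "\<lambda>j. j + Suc (2*k)"]) auto
  then have "bij_betw (g \<circ> (\<lambda>i. i - Suc (2*k))) {Suc (2*k)..2*k + c} F" using g by (rule bij_betw_trans)
  then have high: "bij_betw \<psi> {Suc (2*k)..2*k + c} F"
    unfolding \<psi>_def by (rule bij_betw_cong[THEN iffD1, rotated]) simp
  have "{1..2*k} \<union> {Suc (2*k)..2*k + c} = {1..2*k + c}" by auto
  then have bij: "bij_betw \<psi> {1..2*k + c} (Field R \<union> F)" using bij_betw_combine[OF low high disj] by simp
  have "{(2*p + 1, 2*p + 2) | p. p < k} = (\<lambda>p. (2*p + 1, 2*p + 2)) ` {..<k}" by auto
  then have "map_prod \<psi> \<psi> ` {(2*p + 1, 2*p + 2) | p. p < k} = (\<lambda>p. (\<psi> (2*p + 1), \<psi> (2*p + 2))) ` {..<k}"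
    by (simp add: image_image)
  also have "\<dots> = e ` {..<k}" by (rule image_cong) (simp_all add: \<psi>_def interleave_def)
  also have "\<dots> = R" using e by (simp add: bij_betw_def)
  finally show ?thesis using that bij unfolding k_def c_def by blast
qed

lemma digraph_iso_N_digraph_if_nonedge_shape:
  assumes fr: "fin_refl_digraph D"
    and sv: "single_valued (nonedges D)" and sv': "single_valued ((nonedges D)\<inverse>)"
    and free: "\<not> verts D \<subseteq> Field (nonedges D)" and no_paths: "nonedges D O nonedges D = {}"
  shows "\<exists>n k. 2*k < n \<and> digraph_iso D (N_digraph n k)"
proof -
  define F where "F = verts D - Field (nonedges D)"
  define k where "k = card (nonedges D)"
  define n where "n = 2*k + card F"
  have "finite F" using fr unfolding F_def fin_refl_digraph_def by simp
  moreover have "F \<noteq> {}" using free unfolding F_def by blast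
  ultimately have "2*k < n" unfolding n_def by (simp add: card_gt_0_iff)
  have "Field (nonedges D) \<subseteq> verts D" unfolding Field_def using nonedges_subset_verts by blast
  then have verts: "Field (nonedges D) \<union> F = verts D" and disj: "Field (nonedges D) \<inter> F = {}"
    unfolding F_def by auto
  obtain \<psi> where "bij_betw \<psi> {1..n} (Field (nonedges D) \<union> F)"
    and "map_prod \<psi> \<psi> ` {(2*p + 1, 2*p + 2) | p. p < k} = nonedges D"
    using ex_enumeration_of_matching[OF sv sv' no_paths finite_nonedges[OF fr] \<open>finite F\<close> disj]
    unfolding n_def k_def by blast
  moreover have "nonedges (N_digraph n k) = {(2*p + 1, 2*p + 2) | p. p < k}"
    using \<open>2*k < n\<close> by (simp add: nonedges_N_digraph)
  ultimately have "digraph_iso D (N_digraph n k)"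
    using digraph_iso_if_bij_nonedges[OF fr fin_refl_N_digraph] by (simp add: verts verts_N_digraph)
  with \<open>2*k < n\<close> show ?thesis by blast
qed

section \<open>Labellings and good sequences\<close>

lemma wqo_class_if_good:
  assumes trans: "transp le"
    and good: "\<And>s :: nat \<Rightarrow> _. (\<forall>i. s i \<in> C) \<Longrightarrow> \<exists>i j. i < j \<and> le (s i) (s j)"
  shows "wqo_class le C"
  unfolding wqo_class_def
proof (intro conjI notI)
  assume "\<exists>s. (\<forall>i. s i \<in> C) \<and> (\<forall>i. le (s (Suc i)) (s i) \<and> \<not> le (s i) (s (Suc i)))"
  then obtain s where s: "\<forall>i. s i \<in> C" and down: "\<And>i. le (s (Suc i)) (s i)"
    and strict: "\<And>i. \<not> le (s i) (s (Suc i))" by blast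
  have chain: "le (s j) (s i)" if "i < j" for i j
    using that
  proof (induction rule: less_Suc_induct)
    case (1 i) show ?case by (rule down)
  next
    case (2 i j k) then show ?case using transpD[OF trans] by blast
  qed
  obtain i j where ij: "i < j" "le (s i) (s j)" using good s by blast
  show False
  proof (cases "j = Suc i")
    case True then show False using ij strict by simp
  next
    case False
    then have "Suc i < j" using ij(1) by simp
    then have "le (s j) (s (Suc i))" by (rule chain)
    then show False using ij(2) strict transpD[OF trans] by blast
  qed
next
  assume "\<exists>s :: nat \<Rightarrow> _. (\<forall>i. s i \<in> C) \<and> (\<forall>i j. i \<noteq> j \<longrightarrow> \<not> le (s i) (s j))"
  then obtain s :: "nat \<Rightarrow> _" where s: "\<forall>i. s i \<in> C"
    and anti: "\<forall>i j. i \<noteq> j \<longrightarrow> \<not> le (s i) (s j)" by blast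
  obtain i j where "i < j" "le (s i) (s j)" using good s by blast
  with anti show False by simp
qed

lemma infinite_subset_mono_on:
  fixes t :: "nat \<Rightarrow> nat"
  assumes "infinite J"
  shows "\<exists>J'\<subseteq>J. infinite J' \<and> (\<forall>i\<in>J'. \<forall>j\<in>J'. i < j \<longrightarrow> t i \<le> t j)"
proof -
  define J' where "J' = {i \<in> J. \<forall>j\<in>J. i < j \<longrightarrow> t i \<le> t j}"
  have "\<exists>j\<in>J'. i0 \<le> j" for i0
  proof -
    have ex: "\<exists>v j. j \<in> J \<and> i0 \<le> j \<and> t j = v"
      using assms by (metis infinite_nat_iff_unbounded_le)
    define v where "v = (LEAST v. \<exists>j. j \<in> J \<and> i0 \<le> j \<and> t j = v)"
    obtain j where j: "j \<in> J" "i0 \<le> j" "t j = v"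
      using LeastI_ex[OF ex] unfolding v_def by blast
    have "j \<in> J'" unfolding J'_def
    proof (intro CollectI conjI ballI impI)
      fix j' assume "j' \<in> J" "j < j'"
      then have "v \<le> t j'" unfolding v_def using j(2) by (intro Least_le) auto
      then show "t j \<le> t j'" using j by simp
    qed (use j in auto)
    then show ?thesis using j by blast
  qed
  then have "infinite J'" unfolding infinite_nat_iff_unbounded_le by blast
  moreover have "J' \<subseteq> J" "\<forall>i\<in>J'. \<forall>j\<in>J'. i < j \<longrightarrow> t i \<le> t j" unfolding J'_def by auto
  ultimately show ?thesis by blast
qed

lemma infinite_subset_mono_on_finite_family:
  fixes c :: "nat \<Rightarrow> 'l \<Rightarrow> nat"
  assumes "finite L" "infinite I"
  shows "\<exists>J\<subseteq>I. infinite J \<and> (\<forall>i\<in>J. \<forall>j\<in>J. i < j \<longrightarrow> (\<forall>l\<in>L. c i l \<le> c j l))"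
  using assms
proof (induction L arbitrary: I rule: finite_induct)
  case empty then show ?case by blast
next
  case (insert l L)
  obtain J where J: "J \<subseteq> I" "infinite J" "\<forall>i\<in>J. \<forall>j\<in>J. i < j \<longrightarrow> (\<forall>l\<in>L. c i l \<le> c j l)"
    using insert.IH[OF insert.prems] by blast
  obtain J' where "J' \<subseteq> J" "infinite J'" "\<forall>i\<in>J'. \<forall>j\<in>J'. i < j \<longrightarrow> c i l \<le> c j l"
    using infinite_subset_mono_on[OF J(2), of "\<lambda>i. c i l"] by blast
  with J have "J' \<subseteq> I" "\<forall>i\<in>J'. \<forall>j\<in>J'. i < j \<longrightarrow> (\<forall>l'\<in>insert l L. c i l' \<le> c j l')"
    by auto
  with \<open>infinite J'\<close> show ?case by blast
qed

definition faithful_labelling :: "'a digraph \<Rightarrow> ('a \<Rightarrow> 'l) \<Rightarrow> bool" where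
  "faithful_labelling E \<tau> \<longleftrightarrow>
     (\<forall>x y x' y'. (x, y) \<in> nonedges E \<longrightarrow> \<tau> x' = \<tau> x \<longrightarrow> \<tau> y' = \<tau> y \<longrightarrow> (x', y') \<in> nonedges E)"

definition label_count :: "'a digraph \<Rightarrow> ('a \<Rightarrow> 'l) \<Rightarrow> 'l \<Rightarrow> nat" where
  "label_count E \<tau> l = card {x \<in> verts E. \<tau> x = l}"

lemma ex_image_eq_if_card_le:
  assumes "finite A" "finite B" "B \<noteq> {}" "card B \<le> card A"
  shows "\<exists>g. g ` A = B"
proof -
  obtain h where h: "h ` B \<subseteq> A" "inj_on h B" using card_le_inj[OF assms(2,1,4)] by blast
  obtain b0 where b0: "b0 \<in> B" using assms(3) by blast
  define g where "g a = (if a \<in> h ` B then inv_into B h a else b0)" for a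
  have "g ` A \<subseteq> B" unfolding g_def using b0 by (auto intro: inv_into_into)
  moreover have "b \<in> g ` A" if "b \<in> B" for b
  proof -
    have "g (h b) = b" unfolding g_def using h that by auto
    then show ?thesis using h that by (metis image_eqI subsetD)
  qed
  ultimately show ?thesis by blast
qed

lemma ex_label_preserving_onto:
  fixes \<tau> :: "'a \<Rightarrow> 'l" and \<tau>' :: "'b \<Rightarrow> 'l"
  assumes fin: "finite V" "finite V'" and labels: "\<tau> ` V = \<tau>' ` V'"
    and counts: "\<And>l. card {x \<in> V. \<tau> x = l} \<le> card {x \<in> V'. \<tau>' x = l}"
  obtains f where "f ` V' = V" "\<And>x. x \<in> V' \<Longrightarrow> \<tau> (f x) = \<tau>' x"
proof -
  define A where "A l = {x \<in> V'. \<tau>' x = l}" for l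
  define B where "B l = {x \<in> V. \<tau> x = l}" for l
  have "\<exists>g. g ` A l = B l" if "l \<in> \<tau>' ` V'" for l
  proof (rule ex_image_eq_if_card_le)
    show "finite (A l)" "finite (B l)" using fin unfolding A_def B_def by auto
    have "l \<in> \<tau> ` V" using that labels by simp
    then obtain y where "y \<in> V" "\<tau> y = l" by (rule imageE) simp
    then show "B l \<noteq> {}" unfolding B_def by blast
    show "card (B l) \<le> card (A l)" using counts[of l] unfolding A_def B_def .
  qed
  then have "\<forall>l\<in>\<tau>' ` V'. \<exists>g. g ` A l = B l" by blast
  then obtain G where "\<forall>l\<in>\<tau>' ` V'. G l ` A l = B l" by (rule bchoice[THEN exE])
  then have G: "G l ` A l = B l" if "l \<in> \<tau>' ` V'" for l using that by blast
  define f where "f x = G (\<tau>' x) x" for x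
  have f: "f x \<in> V \<and> \<tau> (f x) = \<tau>' x" if "x \<in> V'" for x
  proof -
    have "f x \<in> G (\<tau>' x) ` A (\<tau>' x)" using that unfolding f_def A_def by simp
    then show ?thesis using G[of "\<tau>' x"] that unfolding B_def by auto
  qed
  have "f ` V' = V"
  proof
    show "f ` V' \<subseteq> V" using f by auto
    show "V \<subseteq> f ` V'"
    proof
      fix y assume y: "y \<in> V"
      then have "\<tau> y \<in> \<tau>' ` V'" using labels by auto
      moreover have "y \<in> B (\<tau> y)" using y unfolding B_def by simp
      ultimately have "y \<in> G (\<tau> y) ` A (\<tau> y)" using G by simp
      then obtain x where "x \<in> A (\<tau> y)" "G (\<tau> y) x = y" by (rule imageE) simp
      then have "x \<in> V'" "f x = y" unfolding f_def A_def by auto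
      then show "y \<in> f ` V'" by (metis imageI)
    qed
  qed
  then show ?thesis using that f by blast
qed

lemma hom_image_le_if_labels_dominate:
  assumes E: "fin_refl_digraph E" and E': "fin_refl_digraph E'" and faithful: "faithful_labelling E' \<tau>'"
    and labels: "\<tau> ` verts E = \<tau>' ` verts E'"
    and nonedge_labels: "map_prod \<tau> \<tau> ` nonedges E = map_prod \<tau>' \<tau>' ` nonedges E'"
    and counts: "\<And>l. label_count E \<tau> l \<le> label_count E' \<tau>' l"
  shows "hom_image_le E E'"
proof -
  have fin: "finite (verts E)" "finite (verts E')" using E E' unfolding fin_refl_digraph_def by simp_all
  obtain f where onto: "f ` verts E' = verts E" and f: "\<And>x. x \<in> verts E' \<Longrightarrow> \<tau> (f x) = \<tau>' x"
    using ex_label_preserving_onto[OF fin labels counts[unfolded label_count_def]] by blast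
  have "(x, y) \<in> nonedges E'"
    if x: "x \<in> verts E'" and y: "y \<in> verts E'" and ne: "(f x, f y) \<in> nonedges E" for x y
  proof -
    have "map_prod \<tau> \<tau> (f x, f y) \<in> map_prod \<tau>' \<tau>' ` nonedges E'"
      using ne nonedge_labels by blast
    then obtain x0 y0 where "(x0, y0) \<in> nonedges E'" "\<tau>' x0 = \<tau>' x" "\<tau>' y0 = \<tau>' y"
      using f[OF x] f[OF y] by auto
    then show ?thesis using faithful[unfolded faithful_labelling_def, rule_format, of x0 y0 x y] by simp
  qed
  with onto have "is_surj_hom f E' E" unfolding is_surj_hom_iff_nonedges[OF E' E] by blast
  then show ?thesis unfolding hom_image_le_def by blast
qed

lemma good_if_faithfully_labelled:
  fixes s :: "nat \<Rightarrow> 'a digraph" and \<tau> :: "nat \<Rightarrow> 'a \<Rightarrow> 'l"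
  assumes L: "finite L" and fr: "\<And>i. fin_refl_digraph (s i)"
    and lab: "\<And>i. \<tau> i ` verts (s i) \<subseteq> L" and faithful: "\<And>i. faithful_labelling (s i) (\<tau> i)"
  shows "\<exists>i j. i < j \<and> hom_image_le (s i) (s j)"
proof -
  define profile where "profile i = (map_prod (\<tau> i) (\<tau> i) ` nonedges (s i), \<tau> i ` verts (s i))" for i
  have "range profile \<subseteq> Pow (L \<times> L) \<times> Pow L"
    unfolding profile_def using lab nonedges_subset_verts by fastforce
  moreover have "finite (Pow (L \<times> L) \<times> Pow L)" using L by simp
  ultimately have "finite (range profile)" by (rule finite_subset)
  then obtain i0 where "infinite {i \<in> UNIV. profile i = profile i0}"
    using pigeonhole_infinite[of UNIV profile] by auto
  then have "infinite {i. profile i = profile i0}" by simp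
  from infinite_subset_mono_on_finite_family[OF L this, where c = "\<lambda>i. label_count (s i) (\<tau> i)"]
  obtain J where J: "J \<subseteq> {i. profile i = profile i0}" "infinite J"
      and mono: "\<forall>i\<in>J. \<forall>j\<in>J. i < j \<longrightarrow> (\<forall>l\<in>L. label_count (s i) (\<tau> i) l \<le> label_count (s j) (\<tau> j) l)"
    by blast
  have "J \<noteq> {}" using J(2) by auto
  then obtain i where i: "i \<in> J" by blast
  obtain j where j: "j \<in> J" "i < j" using J(2) unfolding infinite_nat_iff_unbounded by blast
  have "hom_image_le (s i) (s j)"
  proof (rule hom_image_le_if_labels_dominate[OF fr fr faithful])
    have "profile i = profile i0" "profile j = profile i0" using i j(1) J(1) by blast+
    then have "profile i = profile j" by simp
    then show "\<tau> i ` verts (s i) = \<tau> j ` verts (s j)"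
      "map_prod (\<tau> i) (\<tau> i) ` nonedges (s i) = map_prod (\<tau> j) (\<tau> j) ` nonedges (s j)"
      unfolding profile_def by simp_all
    show "label_count (s i) (\<tau> i) l \<le> label_count (s j) (\<tau> j) l" for l
    proof (cases "l \<in> L")
      case True then show ?thesis using mono i j by blast
    next
      case False
      then have "{x \<in> verts (s i). \<tau> i x = l} = {}" using lab[of i] by auto
      then show ?thesis unfolding label_count_def by (simp only: card.empty le0)
    qed
  qed
  then show ?thesis using j by blast
qed

definition cover_labels :: "nat \<Rightarrow> (nat + nat set \<times> nat set) set" where
  "cover_labels n = Inl ` {..<n} \<union> Inr ` (Pow {..<n} \<times> Pow {..<n})"

lemma finite_cover_labels: "finite (cover_labels n)"
  unfolding cover_labels_def by simp

text \<open>Vertices outside \<open>C\<close> are pairwise adjacent, so as far as non-edges are concerned such a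
  vertex is determined by its non-neighbours in \<open>C\<close>.\<close>
lemma faithful_labelling_if_nonedge_cover:
  assumes C: "finite C" "card C \<le> n"
    and cover: "\<And>x y. (x, y) \<in> nonedges E \<Longrightarrow> x \<in> C \<or> y \<in> C"
  shows "\<exists>\<tau>. \<tau> ` verts E \<subseteq> cover_labels n \<and> faithful_labelling E \<tau>"
proof -
  obtain idx where idx: "inj_on idx C" "idx ` C \<subseteq> {..<n}"
    using card_le_inj[of C "{..<n}"] C by auto
  define out where "out x = idx ` {c \<in> C. (x, c) \<in> nonedges E}" for x
  define into where "into x = idx ` {c \<in> C. (c, x) \<in> nonedges E}" for x
  have out_iff: "idx c \<in> out x \<longleftrightarrow> (x, c) \<in> nonedges E" if "c \<in> C" for c x
    unfolding out_def using inj_on_image_mem_iff[OF idx(1) that, of "{c \<in> C. (x, c) \<in> nonedges E}"]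
    by (simp add: subset_iff that)
  have into_iff: "idx c \<in> into x \<longleftrightarrow> (c, x) \<in> nonedges E" if "c \<in> C" for c x
    unfolding into_def using inj_on_image_mem_iff[OF idx(1) that, of "{c \<in> C. (c, x) \<in> nonedges E}"]
    by (simp add: subset_iff that)
  define \<tau> where "\<tau> x = (if x \<in> C then Inl (idx x) else Inr (out x, into x))" for x
  have same_label: "x' = x" if "\<tau> x' = \<tau> x" "x \<in> C" for x x'
  proof -
    have "x' \<in> C" "idx x' = idx x" using that unfolding \<tau>_def by (simp_all split: if_splits)
    then show ?thesis using idx(1) \<open>x \<in> C\<close> by (simp add: inj_on_eq_iff)
  qed
  have "out x \<subseteq> {..<n}" "into x \<subseteq> {..<n}" for x using idx(2) unfolding out_def into_def by auto
  then have "\<tau> x \<in> cover_labels n" for x using idx(2) unfolding \<tau>_def cover_labels_def by auto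
  then have "\<tau> ` verts E \<subseteq> cover_labels n" by blast
  moreover have "faithful_labelling E \<tau>"
    unfolding faithful_labelling_def
  proof (intro allI impI)
    fix x y x' y' assume ne: "(x, y) \<in> nonedges E" and lab: "\<tau> x' = \<tau> x" "\<tau> y' = \<tau> y"
    show "(x', y') \<in> nonedges E"
    proof (cases "x \<in> C")
      case True
      then have "x' = x" by (rule same_label[OF lab(1)])
      show ?thesis
      proof (cases "y \<in> C")
        case True then show ?thesis using same_label[OF lab(2) True] ne \<open>x' = x\<close> by simp
      next
        case False
        then have "y' \<notin> C" "into y' = into y" using lab(2) unfolding \<tau>_def by (auto split: if_splits)
        moreover have "idx x \<in> into y" using into_iff[OF \<open>x \<in> C\<close>] ne by simp
        ultimately show ?thesis using into_iff[OF \<open>x \<in> C\<close>, of y'] \<open>x' = x\<close> by simp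
      qed
    next
      case False
      then have "y \<in> C" using cover ne by blast
      then have "y' = y" by (rule same_label[OF lab(2)])
      have "x' \<notin> C" "out x' = out x" using lab(1) False unfolding \<tau>_def by (auto split: if_splits)
      moreover have "idx y \<in> out x" using out_iff[OF \<open>y \<in> C\<close>] ne by simp
      ultimately show ?thesis using out_iff[OF \<open>y \<in> C\<close>, of x'] \<open>y' = y\<close> by simp
    qed
  qed
  ultimately show ?thesis by blast
qed

section \<open>Matchings of non-edges\<close>

definition nonedge_matching :: "'a digraph \<Rightarrow> nat \<Rightarrow> (nat \<Rightarrow> 'a) \<Rightarrow> (nat \<Rightarrow> 'a) \<Rightarrow> bool" where
  "nonedge_matching E j a b \<longleftrightarrow> (\<forall>m<j. (a m, b m) \<in> nonedges E)
     \<and> inj_on a {..<j} \<and> inj_on b {..<j} \<and> a ` {..<j} \<inter> b ` {..<j} = {}"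

lemma nonedge_matching_mono:
  assumes "nonedge_matching E j a b" "i \<le> j"
  shows "nonedge_matching E i a b"
proof -
  have sub: "{..<i} \<subseteq> {..<j}" using assms(2) by auto
  then have "a ` {..<i} \<subseteq> a ` {..<j}" "b ` {..<i} \<subseteq> b ` {..<j}" by (simp_all add: image_mono)
  moreover have "\<forall>m<i. (a m, b m) \<in> nonedges E" using assms unfolding nonedge_matching_def by simp
  ultimately show ?thesis using assms(1) sub unfolding nonedge_matching_def
    by (meson disjoint_iff inj_on_subset subsetD)
qed

lemma nonedge_matching_size_le:
  assumes "finite (verts E)" "nonedge_matching E j a b"
  shows "j \<le> card (verts E)"
proof -
  have "a ` {..<j} \<subseteq> verts E" "inj_on a {..<j}"
    using assms(2) nonedges_subset_verts unfolding nonedge_matching_def by blast+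
  from card_inj_on_le[OF this(2) this(1) assms(1)] show ?thesis by simp
qed

lemma nonedge_matching_extend:
  assumes M: "nonedge_matching E j a b" and xy: "(x, y) \<in> nonedges E"
    and fresh: "x \<notin> a ` {..<j} \<union> b ` {..<j}" "y \<notin> a ` {..<j} \<union> b ` {..<j}"
  shows "nonedge_matching E (Suc j) (a(j := x)) (b(j := y))"
proof -
  have "x \<noteq> y" using xy unfolding nonedges_def by simp
  have lessThan_Suc: "{..<Suc j} = insert j {..<j}" by auto
  have a': "(a(j := x)) ` {..<j} = a ` {..<j}" and b': "(b(j := y)) ` {..<j} = b ` {..<j}" by auto
  show ?thesis
    using M xy fresh \<open>x \<noteq> y\<close> unfolding nonedge_matching_def lessThan_Suc image_insert a' b'
    by (auto simp: less_Suc_eq inj_on_def)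
qed

lemma hom_image_le_N_digraph_if_nonedge_matching:
  assumes E: "fin_refl_digraph E" and M: "nonedge_matching E k a b"
    and "2*k < n" "n \<le> card (verts E)"
  shows "hom_image_le (N_digraph n k) E"
proof -
  define P where "P = a ` {..<k} \<union> b ` {..<k}"
  define R where "R = verts E - P"
  define I where "I = interleave a b"
  have fin: "finite (verts E)" using E unfolding fin_refl_digraph_def by simp
  have "P \<subseteq> verts E" using M nonedges_subset_verts unfolding P_def nonedge_matching_def by blast
  have I: "bij_betw I {1..2*k} P"
    using M unfolding I_def P_def nonedge_matching_def by (intro bij_betw_interleave bij_betw_imageI) auto
  have "card P = 2*k" using bij_betw_same_card[OF I] by simp
  then have "card {Suc (2*k)..n} \<le> card R"
    unfolding R_def using card_Diff_subset[OF finite_subset[OF \<open>P \<subseteq> verts E\<close> fin] \<open>P \<subseteq> verts E\<close>]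
      assms(4) by simp
  then obtain r where r: "r ` R = {Suc (2*k)..n}"
    using ex_image_eq_if_card_le[of R "{Suc (2*k)..n}"] fin assms(3) unfolding R_def by auto
  define h where "h x = (if x \<in> P then inv_into {1..2*k} I x else r x)" for x
  have "h ` P = {1..2*k}"
    using bij_betw_inv_into[OF I] unfolding h_def bij_betw_def by simp
  moreover have "h ` R = {Suc (2*k)..n}" using r unfolding h_def R_def by simp
  moreover have "verts E = P \<union> R" "{1..n} = {1..2*k} \<union> {Suc (2*k)..n}"
    using \<open>P \<subseteq> verts E\<close> assms(3) unfolding R_def by auto
  ultimately have onto: "h ` verts E = verts (N_digraph n k)" unfolding verts_N_digraph by auto
  have in_P: "z \<in> P" if "z \<in> verts E" "h z \<le> 2*k" for z
  proof (rule ccontr)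
    assume "z \<notin> P"
    then have "h z \<in> {Suc (2*k)..n}" using r that(1) unfolding h_def R_def by auto
    then show False using that(2) by simp
  qed
  have lift: "(x, y) \<in> nonedges E"
    if xy: "x \<in> verts E" "y \<in> verts E" and ne: "(h x, h y) \<in> nonedges (N_digraph n k)" for x y
  proof -
    obtain p where p: "p < k" "h x = 2*p + 1" "h y = 2*p + 2"
      using ne nonedges_N_digraph assms(3) by auto
    have "x \<in> P" "y \<in> P" using p xy in_P by simp_all
    then have "x = I (h x)" "y = I (h y)"
      using I unfolding h_def bij_betw_def by (simp_all add: f_inv_into_f)
    then have "x = a p" "y = b p" using p unfolding I_def by (simp_all add: interleave_def)
    then show ?thesis using M p(1) unfolding nonedge_matching_def by simp
  qed
  have "is_surj_hom h E (N_digraph n k)"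
    unfolding is_surj_hom_iff_nonedges[OF E fin_refl_N_digraph] using onto lift by blast
  then show ?thesis unfolding hom_image_le_def by blast
qed

lemma ex_maximal_nonedge_matching:
  fixes E :: "'a digraph"
  assumes fin: "finite (verts E)"
  obtains j a b where "nonedge_matching E j a b" "\<And>a' b'. \<not> nonedge_matching E (Suc j) a' b'"
proof -
  define P where "P i \<longleftrightarrow> (\<exists>a b. nonedge_matching E i a b)" for i
  define j where "j = (GREATEST i. P i)"
  have bounded: "i \<le> card (verts E)" if "P i" for i
    using that nonedge_matching_size_le[OF fin] unfolding P_def by blast
  have "P 0" unfolding P_def nonedge_matching_def by simp
  then have "P j" unfolding j_def using bounded by (rule GreatestI_nat)
  moreover have "\<not> nonedge_matching E (Suc j) a' b'" for a' b'
  proof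
    assume "nonedge_matching E (Suc j) a' b'"
    then have "P (Suc j)" unfolding P_def by blast
    then have "Suc j \<le> j" unfolding j_def using bounded by (rule Greatest_le_nat)
    then show False by simp
  qed
  ultimately show ?thesis using that unfolding P_def by blast
qed

lemma nonedge_cover_if_maximal_matching:
  assumes M: "nonedge_matching E j a b" and maximal: "\<And>a' b'. \<not> nonedge_matching E (Suc j) a' b'"
    and "(x, y) \<in> nonedges E"
  shows "x \<in> a ` {..<j} \<union> b ` {..<j} \<or> y \<in> a ` {..<j} \<union> b ` {..<j}"
proof (rule ccontr)
  assume "\<not> ?thesis"
  then have "nonedge_matching E (Suc j) (a(j := x)) (b(j := y))"
    using nonedge_matching_extend[OF M assms(3)] by simp
  with maximal show False by blast
qed

lemma small_nonedge_cover_if_not_hom_image_le: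
  fixes E :: "'a digraph"
  assumes E: "fin_refl_digraph E" and not_le: "\<not> hom_image_le D E"
    and iso: "digraph_iso D (N_digraph n k)" and "2*k < n"
  shows "\<exists>C. finite C \<and> card C \<le> n \<and> (\<forall>x y. (x, y) \<in> nonedges E \<longrightarrow> x \<in> C \<or> y \<in> C)"
proof -
  have fin: "finite (verts E)" using E unfolding fin_refl_digraph_def by simp
  show ?thesis
  proof (cases "card (verts E) < n")
    case True
    with fin show ?thesis using nonedges_subset_verts[of E] by (intro exI[of _ "verts E"]) auto
  next
    case False
    obtain j a b where M: "nonedge_matching E j a b"
      and maximal: "\<And>a' b'. \<not> nonedge_matching E (Suc j) a' b'"
      using ex_maximal_nonedge_matching[OF fin] by blast
    have "j < k"
    proof (rule ccontr)
      assume "\<not> j < k"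
      then have "nonedge_matching E k a b" using nonedge_matching_mono[OF M] by simp
      moreover have "n \<le> card (verts E)" using False by simp
      ultimately have "hom_image_le (N_digraph n k) E"
        using hom_image_le_N_digraph_if_nonedge_matching[OF E] \<open>2*k < n\<close> by blast
      with hom_image_le_if_digraph_iso[OF iso fin_refl_N_digraph] have "hom_image_le D E"
        by (rule hom_image_le_trans)
      with not_le show False by contradiction
    qed
    define C where "C = a ` {..<j} \<union> b ` {..<j}"
    have "card C \<le> card (a ` {..<j}) + card (b ` {..<j})" unfolding C_def by (rule card_Un_le)
    also have "\<dots> \<le> j + j" using card_image_le[of "{..<j}" a] card_image_le[of "{..<j}" b] by simp
    finally have "card C \<le> n" using \<open>j < k\<close> \<open>2*k < n\<close> by simp
    moreover have "finite C" unfolding C_def by simp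
    ultimately show ?thesis
      using nonedge_cover_if_maximal_matching[OF M maximal] unfolding C_def by blast
  qed
qed

lemma wqo_Av_N_digraph:
  assumes iso: "digraph_iso D (N_digraph n k)" and "2*k < n"
  shows "wqo_class hom_image_le (Av D)"
proof (rule wqo_class_if_good[OF transp_hom_image_le])
  fix s :: "nat \<Rightarrow> nat digraph" assume "\<forall>i. s i \<in> Av D"
  then have fr: "fin_refl_digraph (s i)" and not_le: "\<not> hom_image_le D (s i)" for i
    unfolding Av_def DR_def by auto
  have "\<exists>\<tau>. \<tau> ` verts (s i) \<subseteq> cover_labels n \<and> faithful_labelling (s i) \<tau>" for i
  proof -
    obtain C where "finite C" "card C \<le> n" "\<forall>x y. (x, y) \<in> nonedges (s i) \<longrightarrow> x \<in> C \<or> y \<in> C"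
      using small_nonedge_cover_if_not_hom_image_le[OF fr not_le iso \<open>2*k < n\<close>] by blast
    then show ?thesis by (intro faithful_labelling_if_nonedge_cover) blast+
  qed
  then obtain \<tau> where "\<forall>i. \<tau> i ` verts (s i) \<subseteq> cover_labels n \<and> faithful_labelling (s i) (\<tau> i)"
    by (metis choice)
  then show "\<exists>i j. i < j \<and> hom_image_le (s i) (s j)"
    by (intro good_if_faithfully_labelled[OF finite_cover_labels[of n] fr, where \<tau> = \<tau>]) simp_all
qed

theorem theorem4p6:
  fixes D :: "'a digraph"
  assumes "fin_refl_digraph D"
  shows "wqo_class hom_image_le (Av D) \<longleftrightarrow>
           (\<exists>n k. 2 * k < n \<and> digraph_iso D (N_digraph n k))"
proof
  assume "wqo_class hom_image_le (Av D)"
  from nonedge_shape_if_wqo_Av[OF this] show "\<exists>n k. 2 * k < n \<and> digraph_iso D (N_digraph n k)"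
    by (rule digraph_iso_N_digraph_if_nonedge_shape[OF assms])
next
  assume "\<exists>n k. 2 * k < n \<and> digraph_iso D (N_digraph n k)"
  then obtain n k where "2 * k < n" "digraph_iso D (N_digraph n k)" by blast
  then show "wqo_class hom_image_le (Av D)" by (intro wqo_Av_N_digraph)
qed

end
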